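(* Let $\Omega\subset\mathbb{R}^n$ be a bounded open convex set with smooth boundary and let $u$ be a viscosity solution of $(N_\Lambda)$ with $\Lambda=\Lambda_\infty(\Omega)=\frac{2}{\operatorname{diam}(\Omega)}$. Then there is no nonempty open set $\Omega'$ with $\overline{\Omega'}\subset\Omega$ such that $u=0$ on $\partial\Omega'$ and either $u>0$ in $\Omega'$ or $u<0$ in $\Omega'$.
   Context: $\operatorname{diam}(\Omega)=\sup_{x,y\in\Omega}|x-y|$. $\nu$ denotes the outer unit normal to $\partial\Omega$, and $\Delta_\infty u=\sum_{i,j=1}^n u_{x_i}u_{x_ix_j}u_{x_j}$. For $\Lambda\ge 0$, problem $(N_\Lambda)$ is $$\min\{|\nabla u|-\Lambda|u|,-\Delta_\infty u\}=0 \text{ in }\{u>0\}\cap\Omega,\quad \max\{\Lambda|u|-|\nabla u|,-\Delta_\infty u\}=0 \text{ in }\{u<0\}\cap\Omega,\quad -\Delta_\infty u=0 \text{ in }\{u=0\}\cap\Omega,\quad \tfrac{\partial u}{\partial\nu}=0 \text{ on }\partial\Omega,$$ understood in the viscosity sense as follows. For $s\in\mathbb{R}$, $\xi\in\mathbb{R}^n$, $X$ a symmetric $n\times n$ matrix, let $F(s,\xi,X)=\min\{|\xi|-\Lambda|s|,-\langle X\xi,\xi\rangle\}$, $G(s,\xi,X)=\max\{\Lambda|s|-|\xi|,-\langle X\xi,\xi\rangle\}$, $H(X)=-\langle X\xi,\xi\rangle$ (evaluated at the same $\xi$). For a function $u$ and point $x_0$, let $E$ denote $F$ if $u(x_0)>0$,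 $G$ if $u(x_0)<0$, $H$ if $u(x_0)=0$. An upper semicontinuous $u$ on $\overline\Omega$ is a viscosity subsolution if: for every $x_0\in\Omega$ and $\phi\in C^2(\Omega)$ with $\phi(x_0)=u(x_0)$ and $u(x)<\phi(x)$ for $x\neq x_0$, one has $E(\phi(x_0),\nabla\phi(x_0),\nabla^2\phi(x_0))\le 0$; and for every $x_0\in\partial\Omega$ and $\phi\in C^2(\overline\Omega)$ with the same touching property, $\min\{E(\phi(x_0),\nabla\phi(x_0),\nabla^2\phi(x_0)),\frac{\partial\phi}{\partial\nu}(x_0)\}\le 0$. A lower semicontinuous $u$ is a viscosity supersolution if the same holds with $u(x)>\phi(x)$ for $x\ne x_0$, with "$E\le 0$" replaced by "$E\ge 0$" at interior points and with $\max\{E(\phi(x_0),\nabla\phi(x_0),\nabla^2\phi(x_0)),\frac{\partial\phi}{\partial\nu}(x_0)\}\ge 0$ at boundary points. A continuous $u$ is a viscosity solution if it is both a sub- and a supersolution. *)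

theory Defs
  imports "HOL-Analysis.Analysis"
begin

fun Ck_on :: "nat \<Rightarrow> ('a::euclidean_space \<Rightarrow> real) \<Rightarrow> 'a set \<Rightarrow> bool" where
  "Ck_on 0 f S = continuous_on S f"
| "Ck_on (Suc k) f S =
     ((\<forall>x\<in>S. f differentiable (at x)) \<and> (\<forall>v. Ck_on k (\<lambda>x. frechet_derivative f (at x) v) S))"

definition smooth_on :: "('a::euclidean_space \<Rightarrow> real) \<Rightarrow> 'a set \<Rightarrow> bool" where
  "smooth_on f S = (\<forall>k. Ck_on k f S)"

definition grad :: "('a::euclidean_space \<Rightarrow> real) \<Rightarrow> 'a \<Rightarrow> 'a" where
  "grad \<phi> x = (\<Sum>b\<in>Basis. frechet_derivative \<phi> (at x) b *\<^sub>R b)"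

definition hess_form :: "('a::euclidean_space \<Rightarrow> real) \<Rightarrow> 'a \<Rightarrow> 'a \<Rightarrow> real" where
  "hess_form \<phi> x \<xi> = frechet_derivative (\<lambda>y. frechet_derivative \<phi> (at y) \<xi>) (at x) \<xi>"

definition local_defining_fun :: "'a::euclidean_space set \<Rightarrow> 'a \<Rightarrow> 'a set \<Rightarrow> ('a \<Rightarrow> real) \<Rightarrow> bool" where
  "local_defining_fun \<Omega> x U \<rho> =
     (open U \<and> x \<in> U \<and> smooth_on \<rho> U \<and> (\<forall>y\<in>U. grad \<rho> y \<noteq> 0) \<and>
      \<Omega> \<inter> U = {y\<in>U. \<rho> y < 0})"

definition smooth_boundary :: "'a::euclidean_space set \<Rightarrow> bool" where
  "smooth_boundary \<Omega> = (\<forall>x\<in>frontier \<Omega>. \<exists>U \<rho>. local_defining_fun \<Omega> x U \<rho>)"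

definition outer_normal :: "'a::euclidean_space set \<Rightarrow> 'a \<Rightarrow> 'a" where
  "outer_normal \<Omega> x =
     (SOME \<nu>. \<exists>U \<rho>. local_defining_fun \<Omega> x U \<rho> \<and> \<nu> = (1 / norm (grad \<rho> x)) *\<^sub>R grad \<rho> x)"

text \<open>The operator E(s, xi, q) where q = <X xi, xi>: F if s>0, G if s<0, H if s=0.\<close>
definition E_op :: "real \<Rightarrow> real \<Rightarrow> 'a::euclidean_space \<Rightarrow> real \<Rightarrow> real" where
  "E_op \<Lambda> s \<xi> q =
     (if s > 0 then min (norm \<xi> - \<Lambda> * \<bar>s\<bar>) (- q)
      else if s < 0 then max (\<Lambda> * \<bar>s\<bar> - norm \<xi>) (- q)
      else - q)"

definition visc_subsolution :: "real \<Rightarrow> 'a::euclidean_space set \<Rightarrow> ('a \<Rightarrow> real) \<Rightarrow> bool" where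
  "visc_subsolution \<Lambda> \<Omega> u =
    ((\<forall>x0\<in>\<Omega>. \<forall>\<phi>. Ck_on 2 \<phi> \<Omega> \<and> \<phi> x0 = u x0 \<and> (\<forall>x\<in>\<Omega>. x \<noteq> x0 \<longrightarrow> u x < \<phi> x)
        \<longrightarrow> E_op \<Lambda> (\<phi> x0) (grad \<phi> x0) (hess_form \<phi> x0 (grad \<phi> x0)) \<le> 0) \<and>
     (\<forall>x0\<in>frontier \<Omega>. \<forall>\<phi>. (\<exists>V. open V \<and> closure \<Omega> \<subseteq> V \<and> Ck_on 2 \<phi> V) \<and> \<phi> x0 = u x0 \<and>
        (\<forall>x\<in>closure \<Omega>. x \<noteq> x0 \<longrightarrow> u x < \<phi> x)
        \<longrightarrow> min (E_op \<Lambda> (\<phi> x0) (grad \<phi> x0) (hess_form \<phi> x0 (grad \<phi> x0)))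
                (grad \<phi> x0 \<bullet> outer_normal \<Omega> x0) \<le> 0))"

definition visc_supersolution :: "real \<Rightarrow> 'a::euclidean_space set \<Rightarrow> ('a \<Rightarrow> real) \<Rightarrow> bool" where
  "visc_supersolution \<Lambda> \<Omega> u =
    ((\<forall>x0\<in>\<Omega>. \<forall>\<phi>. Ck_on 2 \<phi> \<Omega> \<and> \<phi> x0 = u x0 \<and> (\<forall>x\<in>\<Omega>. x \<noteq> x0 \<longrightarrow> u x > \<phi> x)
        \<longrightarrow> E_op \<Lambda> (\<phi> x0) (grad \<phi> x0) (hess_form \<phi> x0 (grad \<phi> x0)) \<ge> 0) \<and>
     (\<forall>x0\<in>frontier \<Omega>. \<forall>\<phi>. (\<exists>V. open V \<and> closure \<Omega> \<subseteq> V \<and> Ck_on 2 \<phi> V) \<and> \<phi> x0 = u x0 \<and>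
        (\<forall>x\<in>closure \<Omega>. x \<noteq> x0 \<longrightarrow> u x > \<phi> x)
        \<longrightarrow> max (E_op \<Lambda> (\<phi> x0) (grad \<phi> x0) (hess_form \<phi> x0 (grad \<phi> x0)))
                (grad \<phi> x0 \<bullet> outer_normal \<Omega> x0) \<ge> 0))"

definition visc_solution :: "real \<Rightarrow> 'a::euclidean_space set \<Rightarrow> ('a \<Rightarrow> real) \<Rightarrow> bool" where
  "visc_solution \<Lambda> \<Omega> u =
     (continuous_on (closure \<Omega>) u \<and> visc_subsolution \<Lambda> \<Omega> u \<and> visc_supersolution \<Lambda> \<Omega> u)"

end

theory Submission
  imports Defs
begin

text \<open>
  Idea of the proof: comparison with an explicit quadratic ridge.
  Suppose \<sigma> u > 0 (\<sigma> = 1 or -1) on a nodal domain \<Omega>' with closure \<Omega>' \<subseteq> \<Omega> and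
  u = 0 on its frontier, and let xb maximise \<sigma> u on closure \<Omega>', with value M.
  Since closure \<Omega>' is a compact subset of the open set \<Omega>, its width in any unit
  direction e is strictly less than D = diam \<Omega>; for a suitable orientation of e, xb
  therefore lies at height t_b < D/2 above a supporting hyperplane {e \<bullet> x = m}, i.e.
  \<Lambda> t_b < 1 for \<Lambda> = 2/D. The ridge a t - b t^2, t = e \<bullet> x - m, with a slightly above
  \<Lambda> M and b small, is nonnegative on closure \<Omega>' but below \<sigma> u at xb, so \<sigma> u minus the
  ridge has a positive maximum c at an interior point x0 of \<Omega>'. Adding c and a quartic
  penalty K |x - x0|^4 gives a C^2 function touching \<sigma> u strictly from above on all of
  \<Omega>, whose gradient at x0 is steeper than \<Lambda> |u(x0)| and whose second derivative along
  the gradient is -2b |gradient|^2 < 0; this contradicts the viscosity inequalities.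
\<close>

section \<open>Polynomial test functions\<close>

definition ridge :: "real \<Rightarrow> real \<Rightarrow> real \<Rightarrow> 'a::euclidean_space \<Rightarrow> 'a \<Rightarrow> real" where
  "ridge a b m e x = a*(e\<bullet>x - m) - b*(e\<bullet>x - m)^2"

definition test_fun ::
    "real \<Rightarrow> real \<Rightarrow> real \<Rightarrow> real \<Rightarrow> real \<Rightarrow> 'a::euclidean_space \<Rightarrow> 'a \<Rightarrow> 'a \<Rightarrow> real" where
  "test_fun a b m c K e x0 x = ridge a b m e x + c + K*((x-x0)\<bullet>(x-x0))^2"

lemma test_fun_has_derivative:
  "(test_fun a b m c K e x0 has_derivative
     (\<lambda>h. a*(e\<bullet>h) - 2*b*(e\<bullet>x - m)*(e\<bullet>h) + 4*K*((x-x0)\<bullet>(x-x0))*((x-x0)\<bullet>h))) (at x)"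
  unfolding test_fun_def[abs_def] ridge_def
  by (rule derivative_eq_intros refl | simp)+ (simp add: fun_eq_iff algebra_simps inner_commute)

lemma test_fun_directional_has_derivative:
  "((\<lambda>x. a*(e\<bullet>v) - 2*b*(e\<bullet>x - m)*(e\<bullet>v) + 4*K*((x-x0)\<bullet>(x-x0))*((x-x0)\<bullet>v)) has_derivative
     (\<lambda>w. -2*b*(e\<bullet>w)*(e\<bullet>v) + 4*K*(2*((x-x0)\<bullet>w)*((x-x0)\<bullet>v) + ((x-x0)\<bullet>(x-x0))*(w\<bullet>v)))) (at x)"
  by (rule derivative_eq_intros refl | simp)+ (simp add: fun_eq_iff algebra_simps inner_commute)

lemma frechet_derivative_test_fun:
  "frechet_derivative (test_fun a b m c K e x0) (at x) =
     (\<lambda>h. a*(e\<bullet>h) - 2*b*(e\<bullet>x - m)*(e\<bullet>h) + 4*K*((x-x0)\<bullet>(x-x0))*((x-x0)\<bullet>h))"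
  by (rule sym, rule frechet_derivative_at, rule test_fun_has_derivative)

lemma frechet_derivative_test_fun_directional:
  "frechet_derivative
     (\<lambda>x. a*(e\<bullet>v) - 2*b*(e\<bullet>x - m)*(e\<bullet>v) + 4*K*((x-x0)\<bullet>(x-x0))*((x-x0)\<bullet>v)) (at x) =
   (\<lambda>w. -2*b*(e\<bullet>w)*(e\<bullet>v) + 4*K*(2*((x-x0)\<bullet>w)*((x-x0)\<bullet>v) + ((x-x0)\<bullet>(x-x0))*(w\<bullet>v)))"
  by (rule sym, rule frechet_derivative_at, rule test_fun_directional_has_derivative)

lemma test_fun_C2: "Ck_on 2 (test_fun a b m c K e x0) S"
proof -
  have "Ck_on (Suc (Suc 0)) (test_fun a b m c K e x0) S"
    unfolding Ck_on.simps frechet_derivative_test_fun frechet_derivative_test_fun_directional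
    using test_fun_has_derivative test_fun_directional_has_derivative
    by (auto simp: differentiable_def intro!: continuous_intros) blast+
  then show ?thesis by (simp add: numeral_2_eq_2)
qed

lemma grad_test_fun: "grad (test_fun a b m c K e x0) x0 = (a - 2*b*(e\<bullet>x0 - m)) *\<^sub>R e"
proof -
  have "grad (test_fun a b m c K e x0) x0 = (\<Sum>i\<in>Basis. ((a - 2*b*(e\<bullet>x0 - m)) * (e\<bullet>i)) *\<^sub>R i)"
    unfolding grad_def frechet_derivative_test_fun by (intro sum.cong) (auto simp: algebra_simps)
  also have "\<dots> = (a - 2*b*(e\<bullet>x0 - m)) *\<^sub>R (\<Sum>i\<in>Basis. (e\<bullet>i) *\<^sub>R i)"
    by (simp add: scaleR_sum_right)
  finally show ?thesis by (simp add: euclidean_representation)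
qed

lemma hess_form_test_fun: "hess_form (test_fun a b m c K e x0) x0 \<xi> = -2*b*(e\<bullet>\<xi>)^2"
  unfolding hess_form_def frechet_derivative_test_fun frechet_derivative_test_fun_directional
  by (simp add: power2_eq_square)

lemma signed_test_fun_value:
  assumes "\<sigma> = 1 \<or> \<sigma> = -1"
  shows "\<sigma> * test_fun (\<sigma>*a) (\<sigma>*b) m (\<sigma>*c) (\<sigma>*K) e x0 x =
           ridge a b m e x + c + K * norm (x - x0)^4"
proof -
  have "((x-x0)\<bullet>(x-x0))^2 = norm (x - x0)^4"
    by (simp add: power2_norm_eq_inner[symmetric] flip: power_mult)
  then show ?thesis using assms by (auto simp: test_fun_def ridge_def)
qed

lemma signed_test_fun_at_centre:
  fixes a b m c K :: real and e x0 :: "'a::euclidean_space"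
  assumes "\<sigma> = 1 \<or> \<sigma> = -1" and "norm e = 1"
  defines "\<psi> \<equiv> test_fun (\<sigma>*a) (\<sigma>*b) m c K e x0"
  shows "norm (grad \<psi> x0) = \<bar>a - 2*b*(e\<bullet>x0 - m)\<bar>"
    and "\<sigma> * hess_form \<psi> x0 (grad \<psi> x0) = -2*b*(a - 2*b*(e\<bullet>x0 - m))^2"
proof -
  have grad: "grad \<psi> x0 = (\<sigma> * (a - 2*b*(e\<bullet>x0 - m))) *\<^sub>R e"
    unfolding \<psi>_def grad_test_fun by (simp add: algebra_simps)
  show "norm (grad \<psi> x0) = \<bar>a - 2*b*(e\<bullet>x0 - m)\<bar>"
    using assms(1,2) by (auto simp: grad)
  have "e \<bullet> e = 1" using assms(2) by (simp add: power2_norm_eq_inner[symmetric])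
  then show "\<sigma> * hess_form \<psi> x0 (grad \<psi> x0) = -2*b*(a - 2*b*(e\<bullet>x0 - m))^2"
    using assms(1) unfolding grad unfolding \<psi>_def hess_form_test_fun
    by (auto simp: algebra_simps power2_eq_square)
qed

section \<open>Steep concave test functions cannot touch a solution\<close>

text \<open>A viscosity solution of (N_\<Lambda>) cannot be touched strictly from above at a positive
  point (\<sigma> = 1), or from below at a negative point (\<sigma> = -1), by a C^2 function whose
  gradient is steeper than \<Lambda>|u| and which is strictly concave (resp. convex) along its
  gradient: there the operator F is positive, resp. G is negative.\<close>
lemma solution_no_steep_touching:
  fixes \<Omega> :: "'a::euclidean_space set"
  assumes sol: "visc_solution \<Lambda> \<Omega> u"
    and x0: "x0 \<in> \<Omega>" and C2: "Ck_on 2 \<psi> \<Omega>" and at_x0: "\<psi> x0 = u x0"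
    and sg: "\<sigma> = 1 \<or> \<sigma> = -1" and u_x0: "\<sigma> * u x0 > 0"
    and touch: "\<forall>x\<in>\<Omega>. x \<noteq> x0 \<longrightarrow> \<sigma> * u x < \<sigma> * \<psi> x"
    and steep: "norm (grad \<psi> x0) > \<Lambda> * \<bar>u x0\<bar>"
    and concave: "\<sigma> * hess_form \<psi> x0 (grad \<psi> x0) < 0"
  shows False
  using sg
proof
  assume "\<sigma> = 1"
  then have "E_op \<Lambda> (\<psi> x0) (grad \<psi> x0) (hess_form \<psi> x0 (grad \<psi> x0)) \<le> 0"
    and "E_op \<Lambda> (\<psi> x0) (grad \<psi> x0) (hess_form \<psi> x0 (grad \<psi> x0)) > 0"
    using sol x0 C2 at_x0 touch u_x0 steep concave
    unfolding visc_solution_def visc_subsolution_def by (auto simp: E_op_def)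
  then show False by linarith
next
  assume "\<sigma> = -1"
  then have "E_op \<Lambda> (\<psi> x0) (grad \<psi> x0) (hess_form \<psi> x0 (grad \<psi> x0)) \<ge> 0"
    and "E_op \<Lambda> (\<psi> x0) (grad \<psi> x0) (hess_form \<psi> x0 (grad \<psi> x0)) < 0"
    using sol x0 C2 at_x0 touch u_x0 steep concave
    unfolding visc_solution_def visc_supersolution_def by (auto simp: E_op_def)
  then show False by linarith
qed

section \<open>Geometry: every nodal domain is thinner than \<Omega>\<close>

text \<open>Two points of an open bounded set are closer than its diameter in every direction:
  both can be pushed a little further apart along e without leaving the set.\<close>
lemma width_lt_diameter:
  fixes \<Omega> :: "'a::euclidean_space set"
  assumes "open \<Omega>" and "bounded \<Omega>" and "p \<in> \<Omega>" and "q \<in> \<Omega>" and e: "norm e = 1"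
  shows "e \<bullet> q - e \<bullet> p < diameter \<Omega>"
proof -
  obtain r1 where "r1 > 0" "ball p r1 \<subseteq> \<Omega>"
    using \<open>open \<Omega>\<close> \<open>p \<in> \<Omega>\<close> open_contains_ball by blast
  moreover obtain r2 where "r2 > 0" "ball q r2 \<subseteq> \<Omega>"
    using \<open>open \<Omega>\<close> \<open>q \<in> \<Omega>\<close> open_contains_ball by blast
  ultimately obtain r where r: "r > 0" "ball p r \<subseteq> \<Omega>" "ball q r \<subseteq> \<Omega>"
    using subset_ball[of "min r1 r2" r1 p] subset_ball[of "min r1 r2" r2 q]
    by (intro that[of "min r1 r2"]) auto
  define \<epsilon> where "\<epsilon> = r / 2"
  have "p - \<epsilon> *\<^sub>R e \<in> ball p r" "q + \<epsilon> *\<^sub>R e \<in> ball q r"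
    using r e by (auto simp: \<epsilon>_def dist_norm)
  then have "p - \<epsilon> *\<^sub>R e \<in> \<Omega>" "q + \<epsilon> *\<^sub>R e \<in> \<Omega>"
    using r by blast+
  then have "dist (q + \<epsilon> *\<^sub>R e) (p - \<epsilon> *\<^sub>R e) \<le> diameter \<Omega>"
    using \<open>bounded \<Omega>\<close> diameter_bounded_bound by blast
  moreover have "e \<bullet> ((q + \<epsilon> *\<^sub>R e) - (p - \<epsilon> *\<^sub>R e)) \<le> dist (q + \<epsilon> *\<^sub>R e) (p - \<epsilon> *\<^sub>R e)"
    using norm_cauchy_schwarz[of e] e by (simp add: dist_norm)
  moreover have "e \<bullet> e = 1" using e by (simp add: power2_norm_eq_inner[symmetric])
  ultimately show ?thesis
    using r by (simp add: \<epsilon>_def inner_diff_right inner_add_right)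
qed

text \<open>Hence any point xb of a compact subset S of \<Omega> lies, for a suitable unit direction e,
  within distance diam(\<Omega>)/2 of a supporting hyperplane {e \<bullet> x = m} of S: take the nearer
  of the two supporting hyperplanes orthogonal to a fixed direction.\<close>
lemma slab_near_point:
  fixes \<Omega> :: "'a::euclidean_space set"
  assumes "open \<Omega>" and "bounded \<Omega>" and "compact S" and "S \<subseteq> \<Omega>" and "xb \<in> S"
  obtains e m where "norm e = 1" and "\<forall>x\<in>S. 0 \<le> e \<bullet> x - m \<and> e \<bullet> x - m \<le> diameter \<Omega>"
    and "e \<bullet> xb - m < diameter \<Omega> / 2"
proof -
  define e0 :: 'a where "e0 = (SOME i. i \<in> Basis)"
  have e0: "norm e0 = 1" unfolding e0_def by (simp add: SOME_Basis)
  have cont: "continuous_on S (\<lambda>x. e0 \<bullet> x)" by (intro continuous_intros)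
  obtain p where p: "p \<in> S" "\<forall>x\<in>S. e0 \<bullet> p \<le> e0 \<bullet> x"
    using continuous_attains_inf[OF \<open>compact S\<close> _ cont] \<open>xb \<in> S\<close> by blast
  obtain q where q: "q \<in> S" "\<forall>x\<in>S. e0 \<bullet> x \<le> e0 \<bullet> q"
    using continuous_attains_sup[OF \<open>compact S\<close> _ cont] \<open>xb \<in> S\<close> by blast
  have width: "e0 \<bullet> q - e0 \<bullet> p < diameter \<Omega>"
    using width_lt_diameter[OF \<open>open \<Omega>\<close> \<open>bounded \<Omega>\<close> _ _ e0] p q \<open>S \<subseteq> \<Omega>\<close> by blast
  show ?thesis
  proof (cases "e0 \<bullet> xb - e0 \<bullet> p < diameter \<Omega> / 2")
    case True
    then show ?thesis
      using that[of e0 "e0 \<bullet> p"] e0 p q width by force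
  next
    case False
    then show ?thesis
      using that[of "-e0" "-(e0 \<bullet> q)"] e0 p q width \<open>xb \<in> S\<close> by force
  qed
qed

section \<open>Construction of a steep concave touching function\<close>

lemma ridge_parameters:
  fixes M \<Lambda> tb T :: real
  assumes "M > 0" and "\<Lambda> \<ge> 0" and "tb \<ge> 0" and "\<Lambda> * tb < 1" and "T \<ge> 0"
  obtains a b where "b > 0" and "a * tb < M" and "\<Lambda> * M < a - 2*b*T"
    and "\<forall>t. 0 \<le> t \<and> t \<le> T \<longrightarrow> 0 \<le> a*t - b*t^2"
proof -
  define \<delta> where "\<delta> = (1 - \<Lambda>*tb) * M / (2*(tb + 1))"
  define a where "a = \<Lambda>*M + \<delta>"
  define b where "b = \<delta> / (4*(T + 1))"
  have \<delta>: "\<delta> > 0" unfolding \<delta>_def using assms by (auto intro!: divide_pos_pos)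
  then have b: "b > 0" using assms by (simp add: b_def)
  have "\<delta> * tb = (1 - \<Lambda>*tb) * M * (tb / (2*(tb + 1)))" by (simp add: \<delta>_def)
  also have "\<dots> < (1 - \<Lambda>*tb) * M * 1"
    using assms by (intro mult_strict_left_mono) (auto simp: field_simps)
  finally have below: "a * tb < M" by (simp add: a_def algebra_simps)
  have "2*b*T = \<delta> * (T / (2*(T + 1)))" using assms by (simp add: b_def field_simps)
  also have "\<dots> < \<delta> * 1" using \<delta> assms by (intro mult_strict_left_mono) (auto simp: field_simps)
  finally have slope: "\<Lambda> * M < a - 2*b*T" by (simp add: a_def)
  have "0 \<le> a*t - b*t^2" if "0 \<le> t" "t \<le> T" for t
  proof -
    have "b * t \<le> b * T" and "0 \<le> b * T" using b that assms(5) by (simp_all add: mult_left_mono)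
    moreover have "0 \<le> \<Lambda> * M" using assms(1,2) by simp
    ultimately have "0 \<le> a - b*t" using slope by linarith
    then have "0 \<le> t * (a - b*t)" using that by simp
    then show ?thesis by (simp add: power2_eq_square algebra_simps)
  qed
  then show ?thesis using that b below slope by blast
qed

lemma positive_max_in_interior:
  fixes U :: "'a::metric_space set" and g :: "'a \<Rightarrow> real"
  assumes "compact (closure U)" and "continuous_on (closure U) g"
    and "\<forall>x\<in>frontier U. g x \<le> 0" and "xb \<in> closure U" and "g xb > 0"
  obtains x0 where "x0 \<in> U" and "\<forall>z\<in>closure U. g z \<le> g x0"
proof -
  have "closure U \<noteq> {}" using assms(4) by auto
  then obtain x0 where x0: "x0 \<in> closure U" "\<forall>z\<in>closure U. g z \<le> g x0"
    using continuous_attains_sup[OF assms(1) _ assms(2)] by blast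
  then have "g x0 > 0" using assms(4,5) by (meson less_le_trans)
  then have "x0 \<notin> frontier U" using assms(3) by (meson not_le)
  then have "x0 \<in> U" using x0(1) closure_Un_frontier[of U] by blast
  then show ?thesis using that x0(2) by blast
qed

text \<open>This is where the value 2/diam(\<Omega>) of \<Lambda> enters.\<close>
lemma nodal_maximum_near_hyperplane:
  fixes \<Omega> \<Omega>' :: "'a::euclidean_space set" and u :: "'a \<Rightarrow> real"
  assumes "open \<Omega>" and "bounded \<Omega>" and "compact (closure \<Omega>')"
    and cont: "continuous_on (closure \<Omega>') u" and sub: "closure \<Omega>' \<subseteq> \<Omega>" and "\<Omega>' \<noteq> {}"
    and sign: "\<forall>x\<in>\<Omega>'. \<sigma> * u x > 0"
  obtains xb e m where "xb \<in> closure \<Omega>'" and "\<forall>x\<in>closure \<Omega>'. \<sigma> * u x \<le> \<sigma> * u xb"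
    and "\<sigma> * u xb > 0" and "norm e = 1"
    and "\<forall>x\<in>closure \<Omega>'. 0 \<le> e \<bullet> x - m \<and> e \<bullet> x - m \<le> diameter \<Omega>"
    and "2 / diameter \<Omega> * (e \<bullet> xb - m) < 1"
proof -
  obtain xb where xb: "xb \<in> closure \<Omega>'" and max: "\<forall>x\<in>closure \<Omega>'. \<sigma> * u x \<le> \<sigma> * u xb"
    using continuous_attains_sup[OF \<open>compact (closure \<Omega>')\<close> _ continuous_on_mult_left[OF cont]]
      \<open>\<Omega>' \<noteq> {}\<close> by (metis closure_eq_empty)
  obtain y where "y \<in> \<Omega>'" using \<open>\<Omega>' \<noteq> {}\<close> by blast
  then have "\<sigma> * u xb > 0" using sign max closure_subset by (meson less_le_trans subsetD)
  obtain e m where e: "norm e = 1" and slab: "\<forall>x\<in>closure \<Omega>'. 0 \<le> e \<bullet> x - m \<and> e \<bullet> x - m \<le> diameter \<Omega>"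
    and near: "e \<bullet> xb - m < diameter \<Omega> / 2"
    using slab_near_point[OF \<open>open \<Omega>\<close> \<open>bounded \<Omega>\<close> \<open>compact (closure \<Omega>')\<close> sub xb] by blast
  have "0 \<le> e \<bullet> xb - m" using slab xb by blast
  then have "2 / diameter \<Omega> * (e \<bullet> xb - m) < 1" using near by (auto simp: field_simps)
  then show ?thesis using that xb max \<open>\<sigma> * u xb > 0\<close> e slab by blast
qed

lemma ridge_touches_nodal_domain:
  fixes \<Omega> \<Omega>' :: "'a::euclidean_space set" and u :: "'a \<Rightarrow> real"
  assumes "open \<Omega>" and "bounded \<Omega>" and cont: "continuous_on (closure \<Omega>) u"
    and sub: "closure \<Omega>' \<subseteq> \<Omega>" and "\<Omega>' \<noteq> {}" and frontier0: "\<forall>x\<in>frontier \<Omega>'. u x = 0"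
    and sign: "\<forall>x\<in>\<Omega>'. \<sigma> * u x > 0" and sg: "\<sigma> = 1 \<or> \<sigma> = -1"
  obtains a b m e x0 where "norm e = 1" and "b > 0" and "x0 \<in> \<Omega>'"
    and "2 / diameter \<Omega> * \<bar>u x0\<bar> < a - 2*b*(e\<bullet>x0 - m)"
    and "\<forall>z\<in>\<Omega>'. \<sigma> * u z - ridge a b m e z \<le> \<sigma> * u x0 - ridge a b m e x0"
proof -
  define \<Lambda> where "\<Lambda> = 2 / diameter \<Omega>"
  have "\<Lambda> \<ge> 0" using diameter_ge_0[OF \<open>bounded \<Omega>\<close>] by (simp add: \<Lambda>_def)
  have "compact (closure \<Omega>')"
    using bounded_subset[OF \<open>bounded \<Omega>\<close> sub] by (simp add: compact_eq_bounded_closed)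
  have "closure \<Omega>' \<subseteq> closure \<Omega>" using sub closure_subset by blast
  then have cont': "continuous_on (closure \<Omega>') u" using continuous_on_subset[OF cont] by blast
  obtain xb e m where xb: "xb \<in> closure \<Omega>'" and max: "\<forall>x\<in>closure \<Omega>'. \<sigma> * u x \<le> \<sigma> * u xb"
    and "\<sigma> * u xb > 0" and e: "norm e = 1"
    and slab: "\<forall>x\<in>closure \<Omega>'. 0 \<le> e \<bullet> x - m \<and> e \<bullet> x - m \<le> diameter \<Omega>"
    and near: "\<Lambda> * (e \<bullet> xb - m) < 1"
    using nodal_maximum_near_hyperplane[OF \<open>open \<Omega>\<close> \<open>bounded \<Omega>\<close> \<open>compact (closure \<Omega>')\<close> cont'
        sub \<open>\<Omega>' \<noteq> {}\<close> sign] unfolding \<Lambda>_def by blast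
  define M where "M = \<sigma> * u xb"
  have "M > 0" using \<open>\<sigma> * u xb > 0\<close> by (simp add: M_def)
  have tb: "0 \<le> e \<bullet> xb - m" and "0 \<le> diameter \<Omega>" using slab xb by auto
  then obtain a b where b: "b > 0" and below: "a * (e \<bullet> xb - m) < M"
    and slope: "\<Lambda> * M < a - 2*b*diameter \<Omega>"
    and nonneg: "\<forall>t. 0 \<le> t \<and> t \<le> diameter \<Omega> \<longrightarrow> 0 \<le> a*t - b*t^2"
    using ridge_parameters[OF \<open>M > 0\<close> \<open>\<Lambda> \<ge> 0\<close> tb near] by blast
  define g where "g x = \<sigma> * u x - ridge a b m e x" for x
  have "b * (e\<bullet>xb - m)^2 \<ge> 0" using b by simp
  then have "g xb > 0" using below unfolding g_def ridge_def M_def by linarith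
  moreover have "\<forall>x\<in>frontier \<Omega>'. g x \<le> 0"
  proof
    fix x assume "x \<in> frontier \<Omega>'"
    then have "u x = 0" and "x \<in> closure \<Omega>'" using frontier0 by (auto simp: frontier_def)
    then show "g x \<le> 0" using nonneg slab unfolding g_def ridge_def by simp
  qed
  moreover have "continuous_on (closure \<Omega>') g"
    unfolding g_def ridge_def by (intro continuous_intros cont')
  ultimately obtain x0 where x0: "x0 \<in> \<Omega>'" and g_max: "\<forall>z\<in>closure \<Omega>'. g z \<le> g x0"
    using positive_max_in_interior[OF \<open>compact (closure \<Omega>')\<close> _ _ xb] by blast
  have x0_closure: "x0 \<in> closure \<Omega>'" using x0 closure_subset by blast
  then have height: "2*b*(e\<bullet>x0 - m) \<le> 2*b*diameter \<Omega>" using slab b by (simp add: mult_left_mono)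
  have "\<bar>u x0\<bar> = \<sigma> * u x0" using sg sign x0 by auto
  also have "\<dots> \<le> M" using max x0_closure unfolding M_def by blast
  finally have "\<Lambda> * \<bar>u x0\<bar> \<le> \<Lambda> * M" using \<open>\<Lambda> \<ge> 0\<close> by (rule mult_left_mono)
  then have "2 / diameter \<Omega> * \<bar>u x0\<bar> < a - 2*b*(e\<bullet>x0 - m)"
    using slope height unfolding \<Lambda>_def by linarith
  moreover have "\<forall>z\<in>\<Omega>'. g z \<le> g x0" using g_max closure_subset by blast
  ultimately show ?thesis using that[OF e b x0] unfolding g_def by blast
qed

lemma quartic_penalty_strict_max:
  fixes f :: "'a::real_normed_vector \<Rightarrow> real"
  assumes "d > 0" and "ball x0 d \<subseteq> U" and "\<forall>x\<in>U. f x \<le> f x0" and "bdd_above (f ` S)"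
  obtains K where "K > 0" and "\<forall>x\<in>S. x \<noteq> x0 \<longrightarrow> f x < f x0 + K * norm (x - x0)^4"
proof -
  obtain B where B: "\<forall>x\<in>S. f x \<le> B" using assms(4) by (auto simp: bdd_above_def)
  define K where "K = (\<bar>B\<bar> + \<bar>f x0\<bar> + 1) / d^4"
  have K: "K > 0" using assms(1) by (simp add: K_def)
  have "f x < f x0 + K * norm (x - x0)^4" if "x \<in> S" "x \<noteq> x0" for x
  proof (cases "x \<in> U")
    case True
    moreover have "K * norm (x - x0)^4 > 0" using K that(2) by simp
    moreover have "f x \<le> f x0" using assms(3) True by blast
    ultimately show ?thesis by linarith
  next
    case False
    then have "x \<notin> ball x0 d" using assms(2) by blast
    then have "d \<le> norm (x - x0)" by (simp add: dist_norm norm_minus_commute)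
    then have "d^4 \<le> norm (x - x0)^4" using assms(1) by (intro power_mono) auto
    then have "K * d^4 \<le> K * norm (x - x0)^4" using K by simp
    moreover have "K * d^4 = \<bar>B\<bar> + \<bar>f x0\<bar> + 1" using assms(1) by (simp add: K_def)
    moreover have "f x \<le> B" using B that(1) by blast
    moreover have "B \<le> \<bar>B\<bar>" and "- f x0 \<le> \<bar>f x0\<bar>" by simp_all
    ultimately show ?thesis by linarith
  qed
  then show ?thesis using that K by blast
qed

lemma steep_concave_touching:
  fixes \<Omega> U :: "'a::euclidean_space set" and u :: "'a \<Rightarrow> real"
  assumes "bounded \<Omega>" and cont: "continuous_on (closure \<Omega>) u"
    and "open U" and "x0 \<in> U" and sg: "\<sigma> = 1 \<or> \<sigma> = -1" and e: "norm e = 1" and b: "b > 0"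
    and "\<Lambda> \<ge> 0"
    and max: "\<forall>z\<in>U. \<sigma> * u z - ridge a b m e z \<le> \<sigma> * u x0 - ridge a b m e x0"
    and steep: "\<Lambda> * \<bar>u x0\<bar> < a - 2*b*(e\<bullet>x0 - m)"
  obtains \<psi> where "Ck_on 2 \<psi> \<Omega>" and "\<psi> x0 = u x0"
    and "\<forall>x\<in>\<Omega>. x \<noteq> x0 \<longrightarrow> \<sigma> * u x < \<sigma> * \<psi> x"
    and "norm (grad \<psi> x0) > \<Lambda> * \<bar>u x0\<bar>" and "\<sigma> * hess_form \<psi> x0 (grad \<psi> x0) < 0"
proof -
  define g where "g x = \<sigma> * u x - ridge a b m e x" for x
  obtain d where "d > 0" "ball x0 d \<subseteq> U" using \<open>open U\<close> \<open>x0 \<in> U\<close> open_contains_ball by blast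
  have "continuous_on (closure \<Omega>) g" unfolding g_def ridge_def by (intro continuous_intros cont)
  then have "bounded (g ` closure \<Omega>)"
    using \<open>bounded \<Omega>\<close> compact_closure compact_continuous_image compact_imp_bounded by blast
  then have "bdd_above (g ` closure \<Omega>)" by (rule bounded_imp_bdd_above)
  then have "bdd_above (g ` \<Omega>)" by (rule bdd_above_mono) (use closure_subset in blast)
  moreover have "\<forall>z\<in>U. g z \<le> g x0" using max unfolding g_def .
  ultimately obtain K where penalty: "\<forall>x\<in>\<Omega>. x \<noteq> x0 \<longrightarrow> g x < g x0 + K * norm (x - x0)^4"
    using quartic_penalty_strict_max[OF \<open>d > 0\<close> \<open>ball x0 d \<subseteq> U\<close>] by blast
  define \<psi> where "\<psi> = test_fun (\<sigma>*a) (\<sigma>*b) m (\<sigma> * g x0) (\<sigma>*K) e x0"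
  have \<psi>: "\<sigma> * \<psi> x = ridge a b m e x + g x0 + K * norm (x - x0)^4" for x
    unfolding \<psi>_def using signed_test_fun_value[OF sg] by blast
  have "\<sigma> * \<psi> x0 = \<sigma> * u x0" using \<psi>[of x0] by (simp add: g_def)
  then have touch_x0: "\<psi> x0 = u x0" using sg by auto
  have touch: "\<forall>x\<in>\<Omega>. x \<noteq> x0 \<longrightarrow> \<sigma> * u x < \<sigma> * \<psi> x"
  proof (intro ballI impI)
    fix x assume "x \<in> \<Omega>" "x \<noteq> x0"
    then have "g x < g x0 + K * norm (x - x0)^4" using penalty by blast
    then show "\<sigma> * u x < \<sigma> * \<psi> x" using \<psi>[of x] unfolding g_def by linarith
  qed
  have C2: "Ck_on 2 \<psi> \<Omega>" unfolding \<psi>_def by (rule test_fun_C2)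
  define \<kappa> where "\<kappa> = a - 2*b*(e\<bullet>x0 - m)"
  have "0 \<le> \<Lambda> * \<bar>u x0\<bar>" using \<open>\<Lambda> \<ge> 0\<close> by simp
  then have "\<kappa> > 0" using steep unfolding \<kappa>_def by linarith
  have "norm (grad \<psi> x0) = \<kappa>" and "\<sigma> * hess_form \<psi> x0 (grad \<psi> x0) = -2*b*\<kappa>^2"
    using signed_test_fun_at_centre[OF sg e] \<open>\<kappa> > 0\<close> unfolding \<psi>_def \<kappa>_def by auto
  then show ?thesis
    using that[OF C2 touch_x0 touch] steep b \<open>\<kappa> > 0\<close> unfolding \<kappa>_def by (simp add: mult_pos_pos)
qed

theorem corollary3:
  fixes \<Omega> :: "'a::euclidean_space set" and u :: "'a \<Rightarrow> real"
  assumes "open \<Omega>" and "bounded \<Omega>" and "convex \<Omega>" and "smooth_boundary \<Omega>"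
    and "visc_solution (2 / diameter \<Omega>) \<Omega> u"
  shows "\<not> (\<exists>\<Omega>'. open \<Omega>' \<and> \<Omega>' \<noteq> {} \<and> closure \<Omega>' \<subseteq> \<Omega> \<and>
              (\<forall>x\<in>frontier \<Omega>'. u x = 0) \<and>
              ((\<forall>x\<in>\<Omega>'. u x > 0) \<or> (\<forall>x\<in>\<Omega>'. u x < 0)))"
proof
  assume "\<exists>\<Omega>'. open \<Omega>' \<and> \<Omega>' \<noteq> {} \<and> closure \<Omega>' \<subseteq> \<Omega> \<and>
              (\<forall>x\<in>frontier \<Omega>'. u x = 0) \<and> ((\<forall>x\<in>\<Omega>'. u x > 0) \<or> (\<forall>x\<in>\<Omega>'. u x < 0))"
  then obtain \<Omega>' where "open \<Omega>'" "\<Omega>' \<noteq> {}" and sub: "closure \<Omega>' \<subseteq> \<Omega>"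
    and frontier0: "\<forall>x\<in>frontier \<Omega>'. u x = 0" and sign: "(\<forall>x\<in>\<Omega>'. u x > 0) \<or> (\<forall>x\<in>\<Omega>'. u x < 0)"
    by blast
  define \<sigma> :: real where "\<sigma> = (if \<forall>x\<in>\<Omega>'. u x > 0 then 1 else -1)"
  have sg: "\<sigma> = 1 \<or> \<sigma> = -1" and \<sigma>_sign: "\<forall>x\<in>\<Omega>'. \<sigma> * u x > 0"
    using sign by (auto simp: \<sigma>_def)
  have cont: "continuous_on (closure \<Omega>) u" using assms(5) by (simp add: visc_solution_def)
  obtain a b m e x0 where e: "norm e = 1" and b: "b > 0" and x0: "x0 \<in> \<Omega>'"
    and steep: "2 / diameter \<Omega> * \<bar>u x0\<bar> < a - 2*b*(e\<bullet>x0 - m)"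
    and max: "\<forall>z\<in>\<Omega>'. \<sigma> * u z - ridge a b m e z \<le> \<sigma> * u x0 - ridge a b m e x0"
    using ridge_touches_nodal_domain[OF \<open>open \<Omega>\<close> \<open>bounded \<Omega>\<close> cont sub \<open>\<Omega>' \<noteq> {}\<close> frontier0 \<sigma>_sign sg] .
  have "2 / diameter \<Omega> \<ge> 0" using diameter_ge_0[OF \<open>bounded \<Omega>\<close>] by simp
  then obtain \<psi> where "Ck_on 2 \<psi> \<Omega>" and "\<psi> x0 = u x0" and "\<forall>x\<in>\<Omega>. x \<noteq> x0 \<longrightarrow> \<sigma> * u x < \<sigma> * \<psi> x"
    and "norm (grad \<psi> x0) > 2 / diameter \<Omega> * \<bar>u x0\<bar>" and "\<sigma> * hess_form \<psi> x0 (grad \<psi> x0) < 0"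
    using steep_concave_touching[OF \<open>bounded \<Omega>\<close> cont \<open>open \<Omega>'\<close> x0 sg e b _ max steep] by blast
  moreover have "x0 \<in> \<Omega>" using x0 sub closure_subset by blast
  ultimately show False
    using solution_no_steep_touching[OF assms(5) _ _ _ sg] \<sigma>_sign x0 by blast
qed

end
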